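(* Let $(x^k,\lambda^k)_{k\ge0}$ be generated by the proximal ADMM applied to (P) from an initial point $(x^0,\lambda^0)$. Suppose Assumption (A1) holds with constants $\rho_0^0,\dots,\rho_{n-1}^0>0$, and that there is $M>0$ with $\|x_{i+1}^0-\varphi(x_i^0)\|^2\le M/\rho_i$ for $i=0,\dots,n-1$. Set $$\bar\alpha=\sum_{i=0}^n f_i(x_i^0)+\sum_{i=0}^{n-1}\frac{5\|\lambda_i^0\|^2}{4\rho_i^0}+n(M+3),$$ and suppose Assumption (A2) holds on the compact set $S_{\bar\alpha}$ with constants $M_f,L_f,C_\varphi,M_\varphi,L_\varphi$. For $i=1,\dots,n$ let $D_{\bar\alpha,i}=\max\{\|x_i-y_i\|: x,y\in S_{\bar\alpha}\}$. Assume the parameters satisfy $$\sum_{j=0}^{i-1}\frac{2(n-j)}{\rho_j}C_{i-1,j}^2<\frac{1}{4\eta_i}\quad\text{for } i=1,\dots,n,$$ and $$\rho_i>\max\Big\{2\rho_i^0,\ \Big(\frac{1-M_\varphi^{n-i}}{1-M_\varphi}M_f+\sum_{j=i}^{n-1}B_{j,i}D_{\bar\alpha,j+1}\Big)^2\Big\}\quad\text{for } i=0,\dots,n-1.$$ Then for all $k\ge1$: $x^k\in S_{\bar\alpha}$; $\|\lambda_i^k\|\le\frac{1-M_\varphi^{n-i}}{1-M_\varphi}M_f+\sum_{j=i}^{n-1}B_{j,i}D_{\bar\alpha,j+1}$ for $i=0,\dots,n-1$; and $$E(k+1)-E(k)\le-\sum_{i=0}^n\Big(c_i\|x_i^{k+1}-x_i^k\|^2+\tilde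 c_i\|x_i^k-x_i^{k-1}\|^2\Big),$$ where $c_i=\frac{1}{4\eta_i}-\sum_{j=0}^{i-1}\frac{2(n-j)}{\rho_j}C_{i-1,j}^2>0$ and $\tilde c_i=\frac{1}{4\eta_i}-\sum_{j=0}^{i-1}\frac{2(n-j)}{\rho_j}\tilde C_{i-1,j}^2>0$ (empty sums being $0$); in particular $E(k)$ is nonincreasing in $k\ge1$.
   Context: Let $n,d\ge1$, and let $f_0,\dots,f_n:\mathbb{R}^d\to\mathbb{R}$ and $\varphi:\mathbb{R}^d\to\mathbb{R}^d$ be continuously differentiable; $\nabla\varphi$ is the Jacobian matrix and $\|\cdot\|$ the Euclidean norm / induced matrix 2-norm. Problem (P): minimize $\sum_{i=0}^n f_i(x_i)$ over $x=(x_0,\dots,x_n)\in(\mathbb{R}^d)^{n+1}$ subject to $x_{j+1}=\varphi(x_j)$, $j=0,\dots,n-1$. For penalty parameters $\rho_0,\dots,\rho_{n-1}>0$ and $\lambda=(\lambda_0,\dots,\lambda_{n-1})\in(\mathbb{R}^d)^n$, $L_\rho(x,\lambda)=\sum_{i=0}^n f_i(x_i)+\sum_{i=0}^{n-1}\big(\langle\lambda_i,x_{i+1}-\varphi(x_i)\rangle+\frac{\rho_i}{2}\|x_{i+1}-\varphi(x_i)\|^2\big)$. Proximal ADMM: given $\eta_0,\dots,\eta_n>0$ and $(x^0,\lambda^0)$, for $k=0,1,\dots$, for $i=0,1,\dots,n$ in this order, $x_i^{k+1}$ is a (global) minimizer over $x_i$ of $L_\rho(x_0^{k+1},\dots,x_{i-1}^{k+1},x_i,x_{i+1}^k,\dots,x_n^k,\lambda^k)+\frac{1}{2\eta_i}\|x_i-x_i^k\|^2$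 (assumed to exist), then $\lambda_j^{k+1}=\lambda_j^k+\rho_j(x_{j+1}^{k+1}-\varphi(x_j^{k+1}))$, $j=0,\dots,n-1$. Lyapunov function: $E(k)=L_\rho(x^k,\lambda^k)+\sum_{i=0}^n\frac{1}{4\eta_i}\|x_i^k-x_i^{k-1}\|^2$ for $k\ge1$. Assumption (A1): there are $\rho_0^0,\dots,\rho_{n-1}^0>0$ such that for every $\alpha\in\mathbb{R}$ the set $S_\alpha=\{x: \sum_{i=0}^n f_i(x_i)+\sum_{i=0}^{n-1}\frac{\rho_i^0}{2}\|x_{i+1}-\varphi(x_i)\|^2\le\alpha\}$ is empty or bounded. Assumption (A2) on a compact set $S\subset(\mathbb{R}^d)^{n+1}$: there are constants $M_f,L_f,C_\varphi,M_\varphi,L_\varphi>0$ such that for all $x,y\in S$ and all $i=0,\dots,n$: $\|\nabla f_i(x_i)\|\le M_f$, $\|\nabla f_i(x_i)-\nabla f_i(y_i)\|\le L_f\|x_i-y_i\|$, $\|\varphi(x_i)\|\le C_\varphi$, $\|\nabla\varphi(x_i)\|\le M_\varphi$, $\|\nabla\varphi(x_i)-\nabla\varphi(y_i)\|\le L_\varphi\|x_i-y_i\|$. Constants: $B_{j,i}=\rho_jM_\varphi^{j-i}+\frac{M_\varphi^{j-i}}{\eta_{j+1}}$ for $j>i$, $B_{i,i}=\frac1{\eta_{i+1}}$; $C_{j,i}=\frac{M_\varphi^{j-i}-M_\varphi^{n-i-1}}{1-M_\varphi}M_fL_\varphi+M_\varphi^{j-i}L_f+(2j-2i+1)\frac{M_\varphi^{j-i}}{\eta_{j+1}}+(2j-2i-1)\rho_jM_\varphi^{j-i}$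 for $j>i$, $C_{i,i}=\frac{1-M_\varphi^{n-i-1}}{1-M_\varphi}M_fL_\varphi+L_f+\frac1{\eta_{i+1}}$; $\tilde C_{j,i}=\frac{M_\varphi^{j-i}}{\eta_{j+1}}+\rho_jM_\varphi^{j-i}$ for $j>i$, $\tilde C_{i,i}=\frac1{\eta_{i+1}}$. Quotients $\frac{M_\varphi^a-M_\varphi^b}{1-M_\varphi}$ ($a\le b$) denote $\sum_{l=a}^{b-1}M_\varphi^l$. *)

theory Defs
  imports "HOL-Analysis.Analysis"
begin

text \<open>Points x = (x_0,...,x_n) of (R^d)^(n+1) are represented as functions nat => 'a,
  of which only the components 0..n matter.  Iterates are indexed as xs k i = x_i^k.\<close>

definition Lrho :: "nat \<Rightarrow> (nat \<Rightarrow> 'a::real_inner \<Rightarrow> real) \<Rightarrow> ('a \<Rightarrow> 'a) \<Rightarrow> (nat \<Rightarrow> real)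
    \<Rightarrow> (nat \<Rightarrow> 'a) \<Rightarrow> (nat \<Rightarrow> 'a) \<Rightarrow> real" where
  "Lrho n f \<phi> \<rho> x lam =
     (\<Sum>i\<le>n. f i (x i)) +
     (\<Sum>i<n. inner (lam i) (x (Suc i) - \<phi> (x i)) + \<rho> i / 2 * (norm (x (Suc i) - \<phi> (x i)))\<^sup>2)"

definition Sset :: "nat \<Rightarrow> (nat \<Rightarrow> 'a::real_normed_vector \<Rightarrow> real) \<Rightarrow> ('a \<Rightarrow> 'a) \<Rightarrow> (nat \<Rightarrow> real)
    \<Rightarrow> real \<Rightarrow> (nat \<Rightarrow> 'a) set" where
  "Sset n f \<phi> \<rho>0 \<alpha> =
     {x. (\<Sum>i\<le>n. f i (x i)) + (\<Sum>i<n. \<rho>0 i / 2 * (norm (x (Suc i) - \<phi> (x i)))\<^sup>2) \<le> \<alpha>}"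

definition bounded_comp :: "nat \<Rightarrow> (nat \<Rightarrow> 'a::real_normed_vector) set \<Rightarrow> bool" where
  "bounded_comp n S = (\<exists>B. \<forall>x\<in>S. \<forall>i\<le>n. norm (x i) \<le> B)"

definition mixpt :: "(nat \<Rightarrow> nat \<Rightarrow> 'a) \<Rightarrow> nat \<Rightarrow> nat \<Rightarrow> 'a \<Rightarrow> nat \<Rightarrow> 'a" where
  "mixpt xs k i z = (\<lambda>j. if j < i then xs (Suc k) j else if j = i then z else xs k j)"

definition prox_admm :: "nat \<Rightarrow> (nat \<Rightarrow> 'a::real_inner \<Rightarrow> real) \<Rightarrow> ('a \<Rightarrow> 'a) \<Rightarrow> (nat \<Rightarrow> real)
    \<Rightarrow> (nat \<Rightarrow> real) \<Rightarrow> (nat \<Rightarrow> nat \<Rightarrow> 'a) \<Rightarrow> (nat \<Rightarrow> nat \<Rightarrow> 'a) \<Rightarrow> bool" where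
  "prox_admm n f \<phi> \<rho> \<eta> xs lam =
     (\<forall>k. (\<forall>i\<le>n. \<forall>z.
            Lrho n f \<phi> \<rho> (mixpt xs k i (xs (Suc k) i)) (lam k)
              + (norm (xs (Suc k) i - xs k i))\<^sup>2 / (2 * \<eta> i)
            \<le> Lrho n f \<phi> \<rho> (mixpt xs k i z) (lam k) + (norm (z - xs k i))\<^sup>2 / (2 * \<eta> i))
        \<and> (\<forall>j<n. lam (Suc k) j = lam k j + \<rho> j *\<^sub>R (xs (Suc k) (Suc j) - \<phi> (xs (Suc k) j))))"

text \<open>Lyapunov function E(k), meaningful for k >= 1.\<close>
definition Elyap :: "nat \<Rightarrow> (nat \<Rightarrow> 'a::real_inner \<Rightarrow> real) \<Rightarrow> ('a \<Rightarrow> 'a) \<Rightarrow> (nat \<Rightarrow> real)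
    \<Rightarrow> (nat \<Rightarrow> real) \<Rightarrow> (nat \<Rightarrow> nat \<Rightarrow> 'a) \<Rightarrow> (nat \<Rightarrow> nat \<Rightarrow> 'a) \<Rightarrow> nat \<Rightarrow> real" where
  "Elyap n f \<phi> \<rho> \<eta> xs lam k =
     Lrho n f \<phi> \<rho> (xs k) (lam k) + (\<Sum>i\<le>n. (norm (xs k i - xs (k - 1) i))\<^sup>2 / (4 * \<eta> i))"

text \<open>(M^a - M^b)/(1 - M), a <= b, understood as sum_{l=a}^{b-1} M^l.\<close>
definition geomq :: "real \<Rightarrow> nat \<Rightarrow> nat \<Rightarrow> real" where
  "geomq M a b = (\<Sum>l\<in>{a..<b}. M ^ l)"

definition Bc :: "(nat \<Rightarrow> real) \<Rightarrow> (nat \<Rightarrow> real) \<Rightarrow> real \<Rightarrow> nat \<Rightarrow> nat \<Rightarrow> real" where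
  "Bc \<rho> \<eta> M\<phi> j i =
     (if j = i then 1 / \<eta> (Suc i) else \<rho> j * M\<phi> ^ (j - i) + M\<phi> ^ (j - i) / \<eta> (Suc j))"

definition Cc :: "nat \<Rightarrow> (nat \<Rightarrow> real) \<Rightarrow> (nat \<Rightarrow> real) \<Rightarrow> real \<Rightarrow> real \<Rightarrow> real \<Rightarrow> real
    \<Rightarrow> nat \<Rightarrow> nat \<Rightarrow> real" where
  "Cc n \<rho> \<eta> Mf Lf M\<phi> L\<phi> j i =
     (if j = i then geomq M\<phi> 0 (n - i - 1) * Mf * L\<phi> + Lf + 1 / \<eta> (Suc i)
      else geomq M\<phi> (j - i) (n - i - 1) * Mf * L\<phi> + M\<phi> ^ (j - i) * Lf
           + (2 * real (j - i) + 1) * M\<phi> ^ (j - i) / \<eta> (Suc j)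
           + (2 * real (j - i) - 1) * \<rho> j * M\<phi> ^ (j - i))"

definition Ct :: "(nat \<Rightarrow> real) \<Rightarrow> (nat \<Rightarrow> real) \<Rightarrow> real \<Rightarrow> nat \<Rightarrow> nat \<Rightarrow> real" where
  "Ct \<rho> \<eta> M\<phi> j i =
     (if j = i then 1 / \<eta> (Suc i) else M\<phi> ^ (j - i) / \<eta> (Suc j) + \<rho> j * M\<phi> ^ (j - i))"

end

theory Submission
  imports Defs
begin

text \<open>
  The first-order condition of the update of block $x_{j+1}$ can be solved for the new multiplier:
  $\lambda_j^{k+1} = -\nabla f_{j+1} - (x_{j+1}^{k+1} - x_{j+1}^k)/\eta_{j+1}
    + \nabla\varphi(x_{j+1})^T(\lambda_{j+1}^{k+1} - \rho_{j+1}(x_{j+2}^{k+1} - x_{j+2}^k))$.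
  Unrolling this backward recursion writes $\lambda^{k+1}$ as a part that depends only on $x^{k+1}$,
  bounded and Lipschitz on $S$, plus a part bounded by a combination of the step lengths
  $\|x_i^{k+1} - x_i^k\|$.
  This bounds the multipliers, and it bounds the increase
  $\sum_j \|\lambda_j^{k+1} - \lambda_j^k\|^2/\rho_j$ of $L_\rho$ caused by the multiplier update
  by the squared lengths of the last two steps (Cauchy-Schwarz). The block minimisations decrease
  $L_\rho$ by $\sum_i \|x_i^{k+1} - x_i^k\|^2/(2\eta_i)$, so $E$ decreases under the parameter
  conditions. Finally, the multiplier bound together with $\rho_i > 2\rho_i^0$ makes $L_\rho + n$
  dominate the function defining the sublevel sets, so by induction every iterate stays in
  $S_{\bar\alpha}$, where the constants of (A2) are valid.
\<close>

lemma abs_inner_le_young: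
  fixes a b :: "'a::real_inner"
  assumes "t > 0"
  shows "\<bar>inner a b\<bar> \<le> (norm a)\<^sup>2 / (2 * t) + t * (norm b)\<^sup>2 / 2"
proof -
  have "0 \<le> (norm a - t * norm b)\<^sup>2 / (2 * t)"
    using assms by simp
  also have "\<dots> = (norm a)\<^sup>2 / (2 * t) + t * (norm b)\<^sup>2 / 2 - norm a * norm b"
    using assms by (simp add: field_simps power2_eq_square)
  finally show ?thesis
    using Cauchy_Schwarz_ineq2[of a b] by linarith
qed

lemma square_le_card_mult_sum_squares:
  fixes u v :: "'b \<Rightarrow> real"
  assumes "finite A" "0 \<le> X" "X \<le> (\<Sum>i\<in>A. u i + v i)"
  shows "X\<^sup>2 \<le> 2 * real (card A) * (\<Sum>i\<in>A. (u i)\<^sup>2 + (v i)\<^sup>2)"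
proof -
  have "X\<^sup>2 \<le> (\<Sum>i\<in>A. (u i + v i) * 1)\<^sup>2"
    using assms by (intro power_mono) auto
  also have "\<dots> \<le> (\<Sum>i\<in>A. (u i + v i)\<^sup>2) * (\<Sum>i\<in>A. 1\<^sup>2)"
    by (rule Cauchy_Schwarz_ineq_sum)
  also have "\<dots> \<le> (\<Sum>i\<in>A. 2 * ((u i)\<^sup>2 + (v i)\<^sup>2)) * (\<Sum>i\<in>A. 1\<^sup>2)"
  proof (intro mult_right_mono sum_mono)
    fix i
    have "0 \<le> (u i - v i)\<^sup>2" by simp
    then show "(u i + v i)\<^sup>2 \<le> 2 * ((u i)\<^sup>2 + (v i)\<^sup>2)"
      by (simp add: power2_eq_square algebra_simps)
  qed (simp add: sum_nonneg)
  finally show ?thesis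
    by (simp add: sum_distrib_left algebra_simps)
qed

definition blinfun_adjoint :: "('a::euclidean_space \<Rightarrow>\<^sub>L 'b::euclidean_space) \<Rightarrow> 'b \<Rightarrow> 'a" where
  "blinfun_adjoint T = adjoint (blinfun_apply T)"

lemma linear_blinfun_adjoint: "linear (blinfun_adjoint T)"
  unfolding blinfun_adjoint_def
  by (intro adjoint_linear bounded_linear.linear blinfun.bounded_linear_right)

lemma inner_blinfun_adjoint: "inner (blinfun_adjoint T w) h = inner w (T h)"
  using adjoint_works[OF bounded_linear.linear[OF blinfun.bounded_linear_right], of h T w]
  by (simp add: blinfun_adjoint_def inner_commute)

lemma blinfun_adjoint_add: "blinfun_adjoint T (a + b) = blinfun_adjoint T a + blinfun_adjoint T b"
  and blinfun_adjoint_diff: "blinfun_adjoint T (a - b) = blinfun_adjoint T a - blinfun_adjoint T b"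
  using linear_add linear_diff linear_blinfun_adjoint by blast+

lemma norm_le_of_inner_eq_blinfun:
  fixes T :: "'a::real_inner \<Rightarrow>\<^sub>L 'b::real_inner"
  assumes "\<And>h. inner w h = inner v (T h)"
  shows "norm w \<le> norm T * norm v"
proof (cases "w = 0")
  case False
  have "norm w * norm w = inner v (T w)"
    using assms[of w] by (simp add: power2_norm_eq_inner[symmetric] power2_eq_square inner_commute)
  also have "\<dots> \<le> norm v * (norm T * norm w)"
    by (intro order_trans[OF norm_cauchy_schwarz] mult_left_mono norm_blinfun) simp
  finally show ?thesis
    using False by (simp add: algebra_simps)
qed simp

lemma norm_blinfun_adjoint_le: "norm (blinfun_adjoint T v) \<le> norm T * norm v"
  by (rule norm_le_of_inner_eq_blinfun) (simp add: inner_blinfun_adjoint)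

lemma norm_blinfun_adjoint_diff_le:
  "norm (blinfun_adjoint S v - blinfun_adjoint T v) \<le> norm (S - T) * norm v"
  by (rule norm_le_of_inner_eq_blinfun)
    (simp add: inner_blinfun_adjoint inner_diff_left inner_diff_right blinfun.diff_left)

lemma geomq_0_Suc: "geomq q 0 (Suc b) = 1 + q * geomq q 0 b"
  unfolding geomq_def sum.atLeast0_lessThan_Suc_shift by (simp add: sum_distrib_left)

lemma geomq_Suc_Suc: "geomq q (Suc a) (Suc b) = q * geomq q a b"
  unfolding geomq_def sum.shift_bounds_Suc_ivl by (simp add: sum_distrib_left)

lemma geomq_nonneg: "q \<ge> 0 \<Longrightarrow> geomq q a b \<ge> 0"
  unfolding geomq_def by (simp add: sum_nonneg)

section \<open>Unrolling the multiplier recursion\<close>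

text \<open>The unrolled multiplier recursion (see \<open>multiplier_backward_recursion\<close>): \<open>lam_grad\<close>
  collects the gradient terms, \<open>lam_prox\<close> the terms coming from the proximal steps \<open>x - y\<close>.\<close>

function lam_grad :: "nat \<Rightarrow> (nat \<Rightarrow> 'a::euclidean_space \<Rightarrow> 'a) \<Rightarrow> ('a \<Rightarrow> 'a \<Rightarrow>\<^sub>L 'a)
    \<Rightarrow> (nat \<Rightarrow> 'a) \<Rightarrow> nat \<Rightarrow> 'a" where
  "lam_grad n gf D\<phi> x j =
     - gf (Suc j) (x (Suc j))
     + (if Suc j < n then blinfun_adjoint (D\<phi> (x (Suc j))) (lam_grad n gf D\<phi> x (Suc j)) else 0)"
  by auto
termination by (relation "Wellfounded.measure (\<lambda>(n, _, _, _, j). n - j)") auto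

function lam_prox :: "nat \<Rightarrow> (nat \<Rightarrow> real) \<Rightarrow> (nat \<Rightarrow> real) \<Rightarrow> ('a::euclidean_space \<Rightarrow> 'a \<Rightarrow>\<^sub>L 'a)
    \<Rightarrow> (nat \<Rightarrow> 'a) \<Rightarrow> (nat \<Rightarrow> 'a) \<Rightarrow> nat \<Rightarrow> 'a" where
  "lam_prox n \<rho> \<eta> D\<phi> x y j =
     - (1 / \<eta> (Suc j)) *\<^sub>R (x (Suc j) - y (Suc j))
     + (if Suc j < n then blinfun_adjoint (D\<phi> (x (Suc j)))
          (lam_prox n \<rho> \<eta> D\<phi> x y (Suc j) - \<rho> (Suc j) *\<^sub>R (x (Suc (Suc j)) - y (Suc (Suc j))))
        else 0)"
  by auto
termination by (relation "Wellfounded.measure (\<lambda>(n, _, _, _, _, _, j). n - j)") auto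

declare lam_grad.simps [simp del] lam_prox.simps [simp del]

lemma lam_eq_lam_grad_add_lam_prox:
  assumes rec: "\<And>j. j < n \<Longrightarrow> L j =
      - gf (Suc j) (x (Suc j)) - (1 / \<eta> (Suc j)) *\<^sub>R (x (Suc j) - y (Suc j))
      + (if Suc j < n
         then blinfun_adjoint (D\<phi> (x (Suc j))) (L (Suc j) - \<rho> (Suc j) *\<^sub>R (x (Suc (Suc j)) - y (Suc (Suc j))))
         else 0)"
  shows "j < n \<Longrightarrow> L j = lam_grad n gf D\<phi> x j + lam_prox n \<rho> \<eta> D\<phi> x y j"
proof (induction j rule: measure_induct_rule[where f="\<lambda>j. n - j"])
  case (less j)
  show ?case
  proof (cases "Suc j < n")
    case True
    with less.IH[of "Suc j"] show ?thesis
      by (simp add: rec[OF less.prems] lam_grad.simps[of n _ _ _ j] lam_prox.simps[of n _ _ _ _ _ j]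
          blinfun_adjoint_add[symmetric] blinfun_adjoint_diff[symmetric] algebra_simps)
  next
    case False
    then show ?thesis
      by (simp add: rec[OF less.prems] lam_grad.simps[of n _ _ _ j] lam_prox.simps[of n _ _ _ _ _ j])
  qed
qed

lemma norm_lam_grad_le:
  assumes "\<And>i. i \<le> n \<Longrightarrow> norm (gf i (x i)) \<le> Mf"
    and "\<And>i. i \<le> n \<Longrightarrow> norm (D\<phi> (x i)) \<le> M\<phi>"
    and "M\<phi> \<ge> 0"
  shows "j < n \<Longrightarrow> norm (lam_grad n gf D\<phi> x j) \<le> geomq M\<phi> 0 (n - j) * Mf"
proof (induction j rule: measure_induct_rule[where f="\<lambda>j. n - j"])
  case (less j)
  show ?case
  proof (cases "Suc j < n")
    case True
    let ?G = "lam_grad n gf D\<phi> x (Suc j)"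
    have "norm (lam_grad n gf D\<phi> x j)
        \<le> norm (gf (Suc j) (x (Suc j))) + norm (blinfun_adjoint (D\<phi> (x (Suc j))) ?G)"
      using True norm_triangle_ineq[of "- gf (Suc j) (x (Suc j))"]
      by (simp add: lam_grad.simps[of n _ _ _ j])
    also have "\<dots> \<le> Mf + M\<phi> * (geomq M\<phi> 0 (n - Suc j) * Mf)"
      using True less.IH[of "Suc j"] assms
      by (intro add_mono order_trans[OF norm_blinfun_adjoint_le] mult_mono) auto
    also have "\<dots> = geomq M\<phi> 0 (n - j) * Mf"
      using True by (simp add: Suc_diff_Suc[symmetric] geomq_0_Suc algebra_simps)
    finally show ?thesis .
  next
    case False
    then have "n - j = 1" using less.prems by simp
    then show ?thesis
      using False assms(1)[of "Suc j"] less.prems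
      by (simp add: lam_grad.simps[of n _ _ _ j] geomq_def)
  qed
qed

lemma norm_lam_grad_diff_le:
  assumes grad_x: "\<And>i. i \<le> n \<Longrightarrow> norm (gf i (x i)) \<le> Mf"
    and jac_x: "\<And>i. i \<le> n \<Longrightarrow> norm (D\<phi> (x i)) \<le> M\<phi>"
    and jac_y: "\<And>i. i \<le> n \<Longrightarrow> norm (D\<phi> (y i)) \<le> M\<phi>"
    and grad_lip: "\<And>i. i \<le> n \<Longrightarrow> norm (gf i (x i) - gf i (y i)) \<le> Lf * norm (x i - y i)"
    and jac_lip: "\<And>i. i \<le> n \<Longrightarrow> norm (D\<phi> (x i) - D\<phi> (y i)) \<le> L\<phi> * norm (x i - y i)"
    and "M\<phi> \<ge> 0" "L\<phi> \<ge> 0"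
  shows "j < n \<Longrightarrow> norm (lam_grad n gf D\<phi> x j - lam_grad n gf D\<phi> y j)
     \<le> (\<Sum>i = Suc j..n. (geomq M\<phi> (i - Suc j) (n - Suc j) * Mf * L\<phi> + M\<phi> ^ (i - Suc j) * Lf)
                          * norm (x i - y i))"
proof (induction j rule: measure_induct_rule[where f="\<lambda>j. n - j"])
  case (less j)
  define a where "a = norm (x (Suc j) - y (Suc j))"
  show ?case
  proof (cases "Suc j < n")
    case True
    define Gx where "Gx = lam_grad n gf D\<phi> x (Suc j)"
    define Gy where "Gy = lam_grad n gf D\<phi> y (Suc j)"
    let ?Ax = "blinfun_adjoint (D\<phi> (x (Suc j)))" and ?Ay = "blinfun_adjoint (D\<phi> (y (Suc j)))"
    let ?S = "\<Sum>i = Suc (Suc j)..n. (geomq M\<phi> (i - Suc (Suc j)) (n - Suc (Suc j)) * Mf * L\<phi>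
                                       + M\<phi> ^ (i - Suc (Suc j)) * Lf) * norm (x i - y i)"
    have "lam_grad n gf D\<phi> x j - lam_grad n gf D\<phi> y j
        = - (gf (Suc j) (x (Suc j)) - gf (Suc j) (y (Suc j)))
          + ((?Ax Gx - ?Ay Gx) + ?Ay (Gx - Gy))"
      using True by (simp add: lam_grad.simps[of n _ _ _ j] Gx_def Gy_def blinfun_adjoint_diff)
    then have "norm (lam_grad n gf D\<phi> x j - lam_grad n gf D\<phi> y j)
        \<le> norm (gf (Suc j) (x (Suc j)) - gf (Suc j) (y (Suc j)))
          + (norm (?Ax Gx - ?Ay Gx) + norm (?Ay (Gx - Gy)))"
      by (metis norm_minus_cancel norm_triangle_le order_refl add_mono)
    also have "\<dots> \<le> Lf * a + (L\<phi> * a * (geomq M\<phi> 0 (n - Suc j) * Mf) + M\<phi> * ?S)"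
    proof (intro add_mono)
      show "norm (gf (Suc j) (x (Suc j)) - gf (Suc j) (y (Suc j))) \<le> Lf * a"
        using grad_lip True by (simp add: a_def)
      have "norm Gx \<le> geomq M\<phi> 0 (n - Suc j) * Mf"
        unfolding Gx_def using grad_x jac_x \<open>M\<phi> \<ge> 0\<close> True by (rule norm_lam_grad_le)
      then show "norm (?Ax Gx - ?Ay Gx) \<le> L\<phi> * a * (geomq M\<phi> 0 (n - Suc j) * Mf)"
        using jac_lip[of "Suc j"] True \<open>L\<phi> \<ge> 0\<close>
        by (intro order_trans[OF norm_blinfun_adjoint_diff_le] mult_mono) (auto simp: a_def)
      show "norm (?Ay (Gx - Gy)) \<le> M\<phi> * ?S"
        using jac_y[of "Suc j"] True less.IH[of "Suc j"] \<open>M\<phi> \<ge> 0\<close>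
        by (intro order_trans[OF norm_blinfun_adjoint_le] mult_mono) (auto simp: Gx_def Gy_def)
    qed
    also have "\<dots> = (\<Sum>i = Suc j..n. (geomq M\<phi> (i - Suc j) (n - Suc j) * Mf * L\<phi> + M\<phi> ^ (i - Suc j) * Lf)
                                    * norm (x i - y i))"
    proof -
      have "M\<phi> * ?S = (\<Sum>i = Suc (Suc j)..n. (geomq M\<phi> (i - Suc j) (n - Suc j) * Mf * L\<phi>
                                              + M\<phi> ^ (i - Suc j) * Lf) * norm (x i - y i))"
        unfolding sum_distrib_left
      proof (rule sum.cong)
        fix i assume "i \<in> {Suc (Suc j)..n}"
        then have "i - Suc j = Suc (i - Suc (Suc j))" "n - Suc j = Suc (n - Suc (Suc j))"
          using True by auto
        then show "M\<phi> * ((geomq M\<phi> (i - Suc (Suc j)) (n - Suc (Suc j)) * Mf * L\<phi>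
                          + M\<phi> ^ (i - Suc (Suc j)) * Lf) * norm (x i - y i))
          = (geomq M\<phi> (i - Suc j) (n - Suc j) * Mf * L\<phi> + M\<phi> ^ (i - Suc j) * Lf) * norm (x i - y i)"
          by (simp add: geomq_Suc_Suc algebra_simps)
      qed simp
      then show ?thesis
        using True by (simp add: sum.atLeast_Suc_atMost[of "Suc j" n] a_def algebra_simps)
    qed
    finally show ?thesis .
  next
    case False
    then have "n = Suc j" using less.prems by simp
    moreover have "norm (lam_grad n gf D\<phi> x j - lam_grad n gf D\<phi> y j)
        = norm (gf (Suc j) (x (Suc j)) - gf (Suc j) (y (Suc j)))"
      using False by (simp add: lam_grad.simps[of n _ _ _ j] norm_minus_commute)
    ultimately show ?thesis
      using grad_lip[of "Suc j"] by (simp add: geomq_def)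
  qed
qed

lemma norm_lam_prox_le:
  assumes "\<And>i. i \<le> n \<Longrightarrow> norm (D\<phi> (x i)) \<le> M\<phi>"
    and "M\<phi> \<ge> 0" and "\<And>i. i < n \<Longrightarrow> \<rho> i > 0" and "\<And>i. i \<le> n \<Longrightarrow> \<eta> i > 0"
  shows "j < n \<Longrightarrow>
    norm (lam_prox n \<rho> \<eta> D\<phi> x y j) \<le> (\<Sum>i = Suc j..n. Ct \<rho> \<eta> M\<phi> (i - 1) j * norm (x i - y i))"
proof (induction j rule: measure_induct_rule[where f="\<lambda>j. n - j"])
  case (less j)
  define a where "a = norm (x (Suc j) - y (Suc j))"
  have first: "norm ((1 / \<eta> (Suc j)) *\<^sub>R (x (Suc j) - y (Suc j))) = a / \<eta> (Suc j)"
    using assms(4)[of "Suc j"] less.prems by (simp add: a_def)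
  show ?case
  proof (cases "Suc j < n")
    case True
    let ?H = "lam_prox n \<rho> \<eta> D\<phi> x y (Suc j)"
    let ?S = "\<Sum>i = Suc (Suc j)..n. Ct \<rho> \<eta> M\<phi> (i - 1) (Suc j) * norm (x i - y i)"
    define d where "d = x (Suc (Suc j)) - y (Suc (Suc j))"
    define b where "b = norm d"
    have "norm ?H \<le> ?S"
      using True less.IH[of "Suc j"] by simp
    then have "norm (?H - \<rho> (Suc j) *\<^sub>R d) \<le> ?S + \<rho> (Suc j) * b"
      using True assms(3)[of "Suc j"] norm_triangle_ineq4[of ?H "\<rho> (Suc j) *\<^sub>R d"]
      by (simp add: b_def)
    then have "norm (lam_prox n \<rho> \<eta> D\<phi> x y j) \<le> a / \<eta> (Suc j) + M\<phi> * (?S + \<rho> (Suc j) * b)"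
      using True assms(1)[of "Suc j"] assms(2) first norm_blinfun_adjoint_le[of "D\<phi> (x (Suc j))"]
        norm_triangle_ineq[of "- (1 / \<eta> (Suc j)) *\<^sub>R (x (Suc j) - y (Suc j))"]
      by (simp add: lam_prox.simps[of n _ _ _ _ _ j] d_def)
        (smt (verit, best) mult_mono norm_ge_zero)
    also have "\<dots> = (\<Sum>i = Suc j..n. Ct \<rho> \<eta> M\<phi> (i - 1) j * norm (x i - y i))"
    proof -
      have "(\<Sum>i = Suc (Suc j)..n. Ct \<rho> \<eta> M\<phi> (i - 1) j * norm (x i - y i))
          = (\<Sum>i = Suc (Suc j)..n. M\<phi> * (Ct \<rho> \<eta> M\<phi> (i - 1) (Suc j) * norm (x i - y i))
               + (if i = Suc (Suc j) then M\<phi> * \<rho> (Suc j) * b else 0))"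
      proof (rule sum.cong)
        fix i assume i: "i \<in> {Suc (Suc j)..n}"
        show "Ct \<rho> \<eta> M\<phi> (i - 1) j * norm (x i - y i)
          = M\<phi> * (Ct \<rho> \<eta> M\<phi> (i - 1) (Suc j) * norm (x i - y i))
            + (if i = Suc (Suc j) then M\<phi> * \<rho> (Suc j) * b else 0)"
        proof (cases "i = Suc (Suc j)")
          case False
          then have "i - 1 - j = Suc (i - 1 - Suc j)" "i - 1 \<noteq> j" "i - 1 \<noteq> Suc j" "Suc (i - 1) = i"
            using i by auto
          then show ?thesis using False by (simp add: Ct_def algebra_simps)
        qed (simp add: Ct_def b_def d_def algebra_simps)
      qed simp
      then show ?thesis
        using True
        by (simp add: sum.atLeast_Suc_atMost[of "Suc j" n] sum.distrib sum_distrib_left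
            Ct_def a_def algebra_simps)
    qed
    finally show ?thesis .
  next
    case False
    then have "lam_prox n \<rho> \<eta> D\<phi> x y j = - (1 / \<eta> (Suc j)) *\<^sub>R (x (Suc j) - y (Suc j))"
      by (simp add: lam_prox.simps[of n _ _ _ _ _ j])
    moreover have "n = Suc j" using False less.prems by simp
    ultimately show ?thesis
      using first assms(4)[of "Suc j"] by (simp add: Ct_def a_def)
  qed
qed

section \<open>The augmented Lagrangian\<close>

lemma Lrho_cong: "(\<And>j. j \<le> n \<Longrightarrow> x j = y j) \<Longrightarrow> Lrho n f \<phi> \<rho> x lam = Lrho n f \<phi> \<rho> y lam"
  unfolding Lrho_def by (intro arg_cong2[where f="(+)"] sum.cong) auto

lemma Lrho_multiplier_step:
  assumes upd: "\<And>j. j < n \<Longrightarrow> lam' j = lam j + \<rho> j *\<^sub>R (x (Suc j) - \<phi> (x j))"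
    and \<rho>: "\<And>j. j < n \<Longrightarrow> \<rho> j > 0"
  shows "Lrho n f \<phi> \<rho> x lam' = Lrho n f \<phi> \<rho> x lam + (\<Sum>j<n. (norm (lam' j - lam j))\<^sup>2 / \<rho> j)"
proof -
  have "inner (lam' j) (x (Suc j) - \<phi> (x j))
      = inner (lam j) (x (Suc j) - \<phi> (x j)) + (norm (lam' j - lam j))\<^sup>2 / \<rho> j" if "j < n" for j
    using upd[OF that] \<rho>[OF that]
    by (simp add: inner_add_left power2_norm_eq_inner[symmetric] power_mult_distrib power2_eq_square)
  then show ?thesis
    unfolding Lrho_def by (simp add: sum.distrib)
qed

lemma Lrho_lower_bound:
  assumes "\<And>j. j < n \<Longrightarrow> \<rho>0 j < \<rho> j"
  shows "(\<Sum>i\<le>n. f i (x i)) + (\<Sum>i<n. \<rho>0 i / 2 * (norm (x (Suc i) - \<phi> (x i)))\<^sup>2)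
     - (\<Sum>i<n. (norm (lam i))\<^sup>2 / (2 * (\<rho> i - \<rho>0 i))) \<le> Lrho n f \<phi> \<rho> x lam"
proof -
  have "\<rho>0 i / 2 * (norm r)\<^sup>2 - (norm (lam i))\<^sup>2 / (2 * (\<rho> i - \<rho>0 i))
      \<le> inner (lam i) r + \<rho> i / 2 * (norm r)\<^sup>2" if "i < n" for i r
  proof -
    have "(\<rho> i - \<rho>0 i) * (norm r)\<^sup>2 / 2 = \<rho> i / 2 * (norm r)\<^sup>2 - \<rho>0 i / 2 * (norm r)\<^sup>2"
      by (simp add: field_simps)
    then show ?thesis
      using abs_inner_le_young[of "\<rho> i - \<rho>0 i" "lam i" r] assms[OF that] by linarith
  qed
  then have "(\<Sum>i<n. \<rho>0 i / 2 * (norm (x (Suc i) - \<phi> (x i)))\<^sup>2 - (norm (lam i))\<^sup>2 / (2 * (\<rho> i - \<rho>0 i)))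
     \<le> (\<Sum>i<n. inner (lam i) (x (Suc i) - \<phi> (x i)) + \<rho> i / 2 * (norm (x (Suc i) - \<phi> (x i)))\<^sup>2)"
    by (intro sum_mono) simp
  then show ?thesis
    unfolding Lrho_def by (simp add: sum_subtractf)
qed

lemma Lrho_upper_bound:
  assumes "\<And>j. j < n \<Longrightarrow> \<rho> j > 0"
  shows "Lrho n f \<phi> \<rho> x lam
     \<le> (\<Sum>i\<le>n. f i (x i)) + (\<Sum>i<n. (norm (lam i))\<^sup>2 / (2 * \<rho> i) + \<rho> i * (norm (x (Suc i) - \<phi> (x i)))\<^sup>2)"
proof -
  have "inner (lam i) r + \<rho> i / 2 * (norm r)\<^sup>2 \<le> (norm (lam i))\<^sup>2 / (2 * \<rho> i) + \<rho> i * (norm r)\<^sup>2"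
    if "i < n" for i r
    using abs_inner_le_young[of "\<rho> i" "lam i" r] assms[OF that] by linarith
  then have "(\<Sum>i<n. inner (lam i) (x (Suc i) - \<phi> (x i)) + \<rho> i / 2 * (norm (x (Suc i) - \<phi> (x i)))\<^sup>2)
     \<le> (\<Sum>i<n. (norm (lam i))\<^sup>2 / (2 * \<rho> i) + \<rho> i * (norm (x (Suc i) - \<phi> (x i)))\<^sup>2)"
    by (intro sum_mono) simp
  then show ?thesis
    unfolding Lrho_def by simp
qed

lemma has_derivative_fun_upd_apply:
  "((\<lambda>z. (x(i := z)) l) has_derivative (\<lambda>h. if l = i then h else 0)) (at z)"
  by (cases "l = i") simp_all

lemma has_derivative_Lrho_update:
  fixes f :: "nat \<Rightarrow> 'a::euclidean_space \<Rightarrow> real" and \<phi> :: "'a \<Rightarrow> 'a" and D\<phi> :: "'a \<Rightarrow> 'a \<Rightarrow>\<^sub>L 'a"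
  assumes f_deriv: "\<And>l z. l \<le> n \<Longrightarrow> (f l has_derivative (\<lambda>h. inner (gf l z) h)) (at z)"
    and \<phi>_deriv: "\<And>z. (\<phi> has_derivative blinfun_apply (D\<phi> z)) (at z)"
    and "i \<le> n"
  shows "((\<lambda>z. Lrho n f \<phi> \<rho> (x(i := z)) lam) has_derivative
      (\<lambda>h. inner (gf i (x i)) h
         + (\<Sum>l<n. inner (lam l + \<rho> l *\<^sub>R (x (Suc l) - \<phi> (x l)))
                      ((if Suc l = i then h else 0) - D\<phi> (x l) (if l = i then h else 0))))) (at (x i))"
proof -
  let ?p = "\<lambda>l z. (x(i := z)) l"
  let ?dp = "\<lambda>l h. if l = i then h else 0"
  let ?q = "\<lambda>l z. ?p (Suc l) z - \<phi> (?p l z)"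
  let ?dq = "\<lambda>l h. ?dp (Suc l) h - D\<phi> (x l) (?dp l h)"
  have q: "(?q l has_derivative ?dq l) (at (x i))" for l
    using has_derivative_compose[OF has_derivative_fun_upd_apply \<phi>_deriv, of x i l "x i"]
    by (intro has_derivative_diff has_derivative_fun_upd_apply) simp
  have fp: "((\<lambda>z. f l (?p l z)) has_derivative (\<lambda>h. inner (gf l (x l)) (?dp l h))) (at (x i))"
    if "l \<le> n" for l
    using has_derivative_compose[OF has_derivative_fun_upd_apply f_deriv[OF that], of x i l "x i"]
    by simp
  have "((\<lambda>z. (\<Sum>l\<le>n. f l (?p l z))
           + (\<Sum>l<n. inner (lam l) (?q l z) + \<rho> l / 2 * inner (?q l z) (?q l z))) has_derivative
        (\<lambda>h. (\<Sum>l\<le>n. inner (gf l (x l)) (?dp l h))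
           + (\<Sum>l<n. inner (lam l) (?dq l h)
                       + \<rho> l / 2 * (inner (?q l (x i)) (?dq l h) + inner (?dq l h) (?q l (x i))))))
      (at (x i))"
    by (intro has_derivative_add has_derivative_sum fp has_derivative_inner_right q
        has_derivative_mult_right has_derivative_inner) simp_all
  moreover have "(\<Sum>l\<le>n. inner (gf l (x l)) (?dp l h)) = inner (gf i (x i)) h" for h
    using \<open>i \<le> n\<close> by (simp add: if_distrib[of "inner _"] cong: if_cong)
  moreover have "inner a d + r / 2 * (inner q d + inner d q) = inner (a + r *\<^sub>R q) d"
    for a q d :: 'a and r
    by (simp add: inner_add_left inner_commute[of d q])
  ultimately show ?thesis
    unfolding Lrho_def power2_norm_eq_inner by simp
qed

section \<open>One step of the proximal ADMM\<close>

locale prox_admm_run =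
  fixes n :: nat and f :: "nat \<Rightarrow> 'a::euclidean_space \<Rightarrow> real" and gf :: "nat \<Rightarrow> 'a \<Rightarrow> 'a"
    and \<phi> :: "'a \<Rightarrow> 'a" and D\<phi> :: "'a \<Rightarrow> 'a \<Rightarrow>\<^sub>L 'a"
    and \<rho> \<eta> :: "nat \<Rightarrow> real" and xs lam :: "nat \<Rightarrow> nat \<Rightarrow> 'a"
  assumes f_deriv: "\<And>i z. i \<le> n \<Longrightarrow> (f i has_derivative (\<lambda>h. inner (gf i z) h)) (at z)"
    and \<phi>_deriv: "\<And>z. (\<phi> has_derivative blinfun_apply (D\<phi> z)) (at z)"
    and \<rho>_pos: "\<And>i. i < n \<Longrightarrow> \<rho> i > 0"
    and \<eta>_pos: "\<And>i. i \<le> n \<Longrightarrow> \<eta> i > 0"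
    and run: "prox_admm n f \<phi> \<rho> \<eta> xs lam"
begin

abbreviation "lyap \<equiv> Elyap n f \<phi> \<rho> \<eta> xs lam"

lemma multiplier_update:
  "j < n \<Longrightarrow> lam (Suc k) j = lam k j + \<rho> j *\<^sub>R (xs (Suc k) (Suc j) - \<phi> (xs (Suc k) j))"
  using run unfolding prox_admm_def by blast

lemma block_update_minimal:
  "i \<le> n \<Longrightarrow>
     Lrho n f \<phi> \<rho> (mixpt xs k i (xs (Suc k) i)) (lam k) + (norm (xs (Suc k) i - xs k i))\<^sup>2 / (2 * \<eta> i)
     \<le> Lrho n f \<phi> \<rho> (mixpt xs k i z) (lam k) + (norm (z - xs k i))\<^sup>2 / (2 * \<eta> i)"
  using run unfolding prox_admm_def by blast

lemma Lrho_block_descent: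
  "Lrho n f \<phi> \<rho> (xs (Suc k)) (lam k) + (\<Sum>i\<le>n. (norm (xs (Suc k) i - xs k i))\<^sup>2 / (2 * \<eta> i))
     \<le> Lrho n f \<phi> \<rho> (xs k) (lam k)"
proof -
  define P where "P = (\<lambda>m j. if j < m then xs (Suc k) j else xs k j)"
  have "Lrho n f \<phi> \<rho> (P m) (lam k) + (\<Sum>i<m. (norm (xs (Suc k) i - xs k i))\<^sup>2 / (2 * \<eta> i))
     \<le> Lrho n f \<phi> \<rho> (P 0) (lam k)" if "m \<le> Suc n" for m
    using that
  proof (induction m)
    case (Suc m)
    have "mixpt xs k m (xs (Suc k) m) = P (Suc m)" "mixpt xs k m (xs k m) = P m"
      by (auto simp: mixpt_def P_def fun_eq_iff less_Suc_eq)
    then have "Lrho n f \<phi> \<rho> (P (Suc m)) (lam k) + (norm (xs (Suc k) m - xs k m))\<^sup>2 / (2 * \<eta> m)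
        \<le> Lrho n f \<phi> \<rho> (P m) (lam k)"
      using block_update_minimal[of m k "xs k m"] Suc.prems by simp
    then show ?case using Suc by simp
  qed simp
  moreover have "Lrho n f \<phi> \<rho> (P (Suc n)) (lam k) = Lrho n f \<phi> \<rho> (xs (Suc k)) (lam k)"
    by (rule Lrho_cong) (simp add: P_def)
  moreover have "P 0 = xs k"
    by (simp add: P_def fun_eq_iff)
  ultimately show ?thesis
    using lessThan_Suc_atMost[of n] by fastforce
qed

text \<open>First-order optimality of the update of block $x_{j+1}$, solved for $\lambda_j^{k+1}$.\<close>
lemma multiplier_backward_recursion:
  assumes "j < n"
  shows "lam (Suc k) j =
      - gf (Suc j) (xs (Suc k) (Suc j)) - (1 / \<eta> (Suc j)) *\<^sub>R (xs (Suc k) (Suc j) - xs k (Suc j))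
      + (if Suc j < n then blinfun_adjoint (D\<phi> (xs (Suc k) (Suc j)))
            (lam (Suc k) (Suc j) - \<rho> (Suc j) *\<^sub>R (xs (Suc k) (Suc (Suc j)) - xs k (Suc (Suc j))))
         else 0)"
proof -
  define i where "i = Suc j"
  define x where "x = mixpt xs k i (xs (Suc k) i)"
  define y where "y = xs k i"
  define w where "w = (\<lambda>l. lam k l + \<rho> l *\<^sub>R (x (Suc l) - \<phi> (x l)))"
  have i: "i \<le> n" using assms by (simp add: i_def)
  have x_upd: "mixpt xs k i z = x(i := z)" for z
    by (auto simp: x_def mixpt_def fun_eq_iff)
  let ?F = "\<lambda>z. Lrho n f \<phi> \<rho> (x(i := z)) (lam k) + 1 / (2 * \<eta> i) * inner (z - y) (z - y)"
  let ?F' = "\<lambda>h. inner (gf i (x i)) h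
      + (\<Sum>l<n. inner (w l) ((if Suc l = i then h else 0) - D\<phi> (x l) (if l = i then h else 0)))
      + 1 / (2 * \<eta> i) * (inner (x i - y) h + inner h (x i - y))"
  have "(?F has_derivative ?F') (at (x i))"
    unfolding w_def
    by (intro has_derivative_add has_derivative_Lrho_update[OF f_deriv \<phi>_deriv i]
        has_derivative_mult_right has_derivative_inner)
      (auto intro!: derivative_eq_intros)
  moreover have "\<forall>z\<in>UNIV. ?F (x i) \<le> ?F z"
  proof
    fix z
    have "xs (Suc k) i = x i" by (simp add: x_def mixpt_def)
    then show "?F (x i) \<le> ?F z"
      using block_update_minimal[OF i, of k z] unfolding x_upd by (simp add: y_def power2_norm_eq_inner)
  qed
  ultimately have F'_zero: "?F' = (\<lambda>h. 0)"
    using differential_zero_maxmin[of "x i" UNIV ?F ?F'] by auto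
  have w_j: "w j = lam (Suc k) j"
    using multiplier_update[OF assms] by (simp add: w_def x_def i_def mixpt_def)
  have w_i: "w i = lam (Suc k) i - \<rho> i *\<^sub>R (xs (Suc k) (Suc i) - xs k (Suc i))" if "i < n"
    using multiplier_update[OF that] by (simp add: w_def x_def mixpt_def algebra_simps)
  define V where "V = gf i (x i) + lam (Suc k) j + (1 / \<eta> i) *\<^sub>R (x i - y)
      - (if i < n then blinfun_adjoint (D\<phi> (x i)) (w i) else 0)"
  have "inner V h = ?F' h" for h
  proof -
    have "(\<Sum>l<n. inner (w l) ((if Suc l = i then h else 0) - D\<phi> (x l) (if l = i then h else 0)))
        = (\<Sum>l<n. (if l = j then inner (w j) h else 0) - (if l = i then inner (w i) (D\<phi> (x i) h) else 0))"
      by (intro sum.cong) (auto simp: i_def inner_diff_right)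
    then show ?thesis
      using assms \<eta>_pos[OF i]
      by (simp add: V_def w_j inner_add_left inner_diff_left inner_blinfun_adjoint inner_commute[of h]
          sum_subtractf)
        (simp add: field_simps)
  qed
  then have "V = 0"
    using F'_zero by (metis inner_eq_zero_iff)
  moreover have "lam (Suc k) j = V - gf i (x i) - (1 / \<eta> i) *\<^sub>R (x i - y)
      + (if i < n then blinfun_adjoint (D\<phi> (x i)) (w i) else 0)"
    by (simp add: V_def algebra_simps)
  moreover have "x i = xs (Suc k) (Suc j)" "y = xs k (Suc j)"
    by (simp_all add: x_def y_def i_def mixpt_def)
  ultimately show ?thesis
    using w_i by (simp add: i_def)
qed

lemma multiplier_decomp:
  "j < n \<Longrightarrow>
    lam (Suc k) j = lam_grad n gf D\<phi> (xs (Suc k)) j + lam_prox n \<rho> \<eta> D\<phi> (xs (Suc k)) (xs k) j"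
  by (rule lam_eq_lam_grad_add_lam_prox) (simp add: multiplier_backward_recursion)

lemma Lrho_le_lyap: "Lrho n f \<phi> \<rho> (xs k) (lam k) \<le> lyap k"
  unfolding Elyap_def using \<eta>_pos by (force intro: sum_nonneg divide_nonneg_pos)

lemma lyap_step:
  "lyap (Suc k) - lyap k
     \<le> (\<Sum>j<n. (norm (lam (Suc k) j - lam k j))\<^sup>2 / \<rho> j)
       - (\<Sum>i\<le>n. (norm (xs (Suc k) i - xs k i))\<^sup>2 / (4 * \<eta> i))
       - (\<Sum>i\<le>n. (norm (xs k i - xs (k - 1) i))\<^sup>2 / (4 * \<eta> i))"
proof -
  have "(\<Sum>i\<le>n. (norm (xs (Suc k) i - xs k i))\<^sup>2 / (2 * \<eta> i))
      = 2 * (\<Sum>i\<le>n. (norm (xs (Suc k) i - xs k i))\<^sup>2 / (4 * \<eta> i))"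
    by (simp add: sum_distrib_left)
  then show ?thesis
    using Lrho_block_descent[of k]
      Lrho_multiplier_step[of n "lam (Suc k)" "lam k", OF multiplier_update \<rho>_pos]
    by (simp add: Elyap_def)
qed

end

section \<open>Multiplier estimates on a set where (A2) holds\<close>

lemma Ct_nonneg:
  assumes "j < i" "\<eta> i > 0" "\<rho> (i - 1) > 0" "M\<phi> \<ge> 0"
  shows "Ct \<rho> \<eta> M\<phi> (i - 1) j \<ge> 0"
  using assms by (auto simp: Ct_def)

lemma grad_coeff_add_Ct_le_Cc:
  assumes "j < i" "\<eta> i > 0" "\<rho> (i - 1) > 0" "M\<phi> \<ge> 0"
  shows "geomq M\<phi> (i - Suc j) (n - Suc j) * Mf * L\<phi> + M\<phi> ^ (i - Suc j) * Lf + Ct \<rho> \<eta> M\<phi> (i - 1) j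
     \<le> Cc n \<rho> \<eta> Mf Lf M\<phi> L\<phi> (i - 1) j"
proof (cases "i - 1 = j")
  case False
  define m where "m = i - 1 - j"
  have m: "i - Suc j = m" "n - Suc j = n - j - 1" "m \<ge> 1" "Suc (i - 1) = i"
    using False assms(1) by (auto simp: m_def)
  have "1 * M\<phi> ^ m \<le> (2 * real m + 1) * M\<phi> ^ m"
    using assms(4) by (intro mult_right_mono) auto
  then have "M\<phi> ^ m / \<eta> i \<le> (2 * real m + 1) * M\<phi> ^ m / \<eta> i"
    using assms(2) by (intro divide_right_mono) auto
  moreover have "\<rho> (i - 1) * M\<phi> ^ m \<le> (2 * real m - 1) * \<rho> (i - 1) * M\<phi> ^ m"
    using m(3) assms(3,4) mult_right_mono[of 1 "2 * real m - 1" "\<rho> (i - 1) * M\<phi> ^ m"]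
    by (simp add: mult.assoc)
  ultimately show ?thesis
    using False unfolding Ct_def Cc_def m m_def[symmetric] by simp
qed (use assms(1) in \<open>auto simp: Ct_def Cc_def\<close>)

lemma Ct_le_Cc:
  assumes "j < i" "\<eta> i > 0" "\<rho> (i - 1) > 0" "M\<phi> \<ge> 0" "Mf \<ge> 0" "Lf \<ge> 0" "L\<phi> \<ge> 0"
  shows "Ct \<rho> \<eta> M\<phi> (i - 1) j \<le> Cc n \<rho> \<eta> Mf Lf M\<phi> L\<phi> (i - 1) j"
  using grad_coeff_add_Ct_le_Cc[of j i \<eta> \<rho> M\<phi> n Mf L\<phi> Lf] assms(1-3) assms(4-7)
  by (smt (verit) geomq_nonneg mult_nonneg_nonneg zero_le_power)

lemma Bc_eq_Ct: "Bc \<rho> \<eta> M\<phi> j i = Ct \<rho> \<eta> M\<phi> j i"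
  by (simp add: Bc_def Ct_def)

locale prox_admm_bounded = prox_admm_run n f gf \<phi> D\<phi> \<rho> \<eta> xs lam
  for n :: nat and f :: "nat \<Rightarrow> 'a::euclidean_space \<Rightarrow> real" and gf \<phi> D\<phi> \<rho> \<eta> xs lam +
  fixes S :: "(nat \<Rightarrow> 'a) set" and D :: "nat \<Rightarrow> real" and Mf Lf M\<phi> L\<phi> :: real
  assumes grad_bounded: "\<And>x i. x \<in> S \<Longrightarrow> i \<le> n \<Longrightarrow> norm (gf i (x i)) \<le> Mf"
    and grad_lipschitz: "\<And>x y i. x \<in> S \<Longrightarrow> y \<in> S \<Longrightarrow> i \<le> n \<Longrightarrow>
          norm (gf i (x i) - gf i (y i)) \<le> Lf * norm (x i - y i)"
    and jac_bounded: "\<And>x i. x \<in> S \<Longrightarrow> i \<le> n \<Longrightarrow> norm (D\<phi> (x i)) \<le> M\<phi>"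
    and jac_lipschitz: "\<And>x y i. x \<in> S \<Longrightarrow> y \<in> S \<Longrightarrow> i \<le> n \<Longrightarrow>
          norm (D\<phi> (x i) - D\<phi> (y i)) \<le> L\<phi> * norm (x i - y i)"
    and coord_diam: "\<And>x y i. x \<in> S \<Longrightarrow> y \<in> S \<Longrightarrow> i \<le> n \<Longrightarrow> norm (x i - y i) \<le> D i"
    and constants_nonneg: "Mf \<ge> 0" "Lf \<ge> 0" "M\<phi> \<ge> 0" "L\<phi> \<ge> 0"
begin

definition multiplier_radius :: "nat \<Rightarrow> real" where
  "multiplier_radius i = geomq M\<phi> 0 (n - i) * Mf + (\<Sum>j = i..<n. Bc \<rho> \<eta> M\<phi> j i * D (Suc j))"

definition coeff_c :: "nat \<Rightarrow> real" where
  "coeff_c i = 1 / (4 * \<eta> i) - (\<Sum>j<i. 2 * real (n - j) / \<rho> j * (Cc n \<rho> \<eta> Mf Lf M\<phi> L\<phi> (i - 1) j)\<^sup>2)"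

definition coeff_ct :: "nat \<Rightarrow> real" where
  "coeff_ct i = 1 / (4 * \<eta> i) - (\<Sum>j<i. 2 * real (n - j) / \<rho> j * (Ct \<rho> \<eta> M\<phi> (i - 1) j)\<^sup>2)"

lemma norm_multiplier_le_radius:
  assumes "xs (Suc k) \<in> S" "xs k \<in> S" "j < n"
  shows "norm (lam (Suc k) j) \<le> multiplier_radius j"
proof -
  have "norm (lam (Suc k) j)
      \<le> norm (lam_grad n gf D\<phi> (xs (Suc k)) j) + norm (lam_prox n \<rho> \<eta> D\<phi> (xs (Suc k)) (xs k) j)"
    unfolding multiplier_decomp[OF assms(3)] by (rule norm_triangle_ineq)
  also have "\<dots> \<le> geomq M\<phi> 0 (n - j) * Mf
      + (\<Sum>i = Suc j..n. Ct \<rho> \<eta> M\<phi> (i - 1) j * norm (xs (Suc k) i - xs k i))"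
    using assms grad_bounded jac_bounded constants_nonneg \<rho>_pos \<eta>_pos
    by (intro add_mono norm_lam_grad_le norm_lam_prox_le) auto
  also have "\<dots> \<le> geomq M\<phi> 0 (n - j) * Mf + (\<Sum>i = Suc j..n. Ct \<rho> \<eta> M\<phi> (i - 1) j * D i)"
    using assms coord_diam Ct_nonneg[of _ _ \<eta> \<rho> M\<phi>] \<eta>_pos \<rho>_pos constants_nonneg
    by (intro add_left_mono sum_mono mult_left_mono) auto
  also have "(\<Sum>i = Suc j..n. Ct \<rho> \<eta> M\<phi> (i - 1) j * D i) = (\<Sum>l = j..<n. Bc \<rho> \<eta> M\<phi> l j * D (Suc l))"
    by (simp add: Bc_eq_Ct atLeastLessThanSuc_atLeastAtMost[symmetric] sum.shift_bounds_Suc_ivl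
        del: sum.op_ivl_Suc)
  finally show ?thesis
    unfolding multiplier_radius_def .
qed

lemma norm_multiplier_diff_le:
  assumes S: "xs (Suc (Suc k)) \<in> S" "xs (Suc k) \<in> S" "xs k \<in> S" and j: "j < n"
  shows "norm (lam (Suc (Suc k)) j - lam (Suc k) j)
      \<le> (\<Sum>i = Suc j..n. Cc n \<rho> \<eta> Mf Lf M\<phi> L\<phi> (i - 1) j * norm (xs (Suc (Suc k)) i - xs (Suc k) i)
                          + Ct \<rho> \<eta> M\<phi> (i - 1) j * norm (xs (Suc k) i - xs k i))"
proof -
  define X where "X = xs (Suc (Suc k))"
  define Y where "Y = xs (Suc k)"
  define W where "W = xs k"
  let ?G = "\<lambda>i. geomq M\<phi> (i - Suc j) (n - Suc j) * Mf * L\<phi> + M\<phi> ^ (i - Suc j) * Lf"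
  let ?Ct = "\<lambda>i. Ct \<rho> \<eta> M\<phi> (i - 1) j"
  have "lam (Suc (Suc k)) j - lam (Suc k) j
      = (lam_grad n gf D\<phi> X j - lam_grad n gf D\<phi> Y j)
        + (lam_prox n \<rho> \<eta> D\<phi> X Y j - lam_prox n \<rho> \<eta> D\<phi> Y W j)"
    unfolding multiplier_decomp[OF j] X_def Y_def W_def by simp
  then have "norm (lam (Suc (Suc k)) j - lam (Suc k) j)
      \<le> norm (lam_grad n gf D\<phi> X j - lam_grad n gf D\<phi> Y j)
        + (norm (lam_prox n \<rho> \<eta> D\<phi> X Y j) + norm (lam_prox n \<rho> \<eta> D\<phi> Y W j))"
    using norm_triangle_ineq[of "lam_grad n gf D\<phi> X j - lam_grad n gf D\<phi> Y j"]
      norm_triangle_ineq4[of "lam_prox n \<rho> \<eta> D\<phi> X Y j" "lam_prox n \<rho> \<eta> D\<phi> Y W j"]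
    by (smt (verit))
  also have "\<dots> \<le> (\<Sum>i = Suc j..n. ?G i * norm (X i - Y i))
      + ((\<Sum>i = Suc j..n. ?Ct i * norm (X i - Y i)) + (\<Sum>i = Suc j..n. ?Ct i * norm (Y i - W i)))"
    using S j grad_bounded grad_lipschitz jac_bounded jac_lipschitz constants_nonneg \<rho>_pos \<eta>_pos
    unfolding X_def Y_def W_def
    by (intro add_mono norm_lam_grad_diff_le norm_lam_prox_le) auto
  also have "\<dots> \<le> (\<Sum>i = Suc j..n. Cc n \<rho> \<eta> Mf Lf M\<phi> L\<phi> (i - 1) j * norm (X i - Y i)
                                  + ?Ct i * norm (Y i - W i))"
    unfolding sum.distrib[symmetric] distrib_right[symmetric] add.assoc[symmetric]
  proof (intro sum_mono add_right_mono mult_right_mono)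
    fix i assume "i \<in> {Suc j..n}"
    then show "?G i + ?Ct i \<le> Cc n \<rho> \<eta> Mf Lf M\<phi> L\<phi> (i - 1) j"
      using \<eta>_pos[of i] \<rho>_pos[of "i - 1"] constants_nonneg by (intro grad_coeff_add_Ct_le_Cc) auto
  qed simp
  finally show ?thesis
    unfolding X_def Y_def W_def .
qed

lemma sum_sq_multiplier_diff_le:
  assumes S: "xs (Suc (Suc k)) \<in> S" "xs (Suc k) \<in> S" "xs k \<in> S"
  defines "a \<equiv> \<lambda>i. norm (xs (Suc (Suc k)) i - xs (Suc k) i)"
    and "b \<equiv> \<lambda>i. norm (xs (Suc k) i - xs k i)"
  shows "(\<Sum>j<n. (norm (lam (Suc (Suc k)) j - lam (Suc k) j))\<^sup>2 / \<rho> j)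
     \<le> (\<Sum>i\<le>n. (1 / (4 * \<eta> i) - coeff_c i) * (a i)\<^sup>2 + (1 / (4 * \<eta> i) - coeff_ct i) * (b i)\<^sup>2)"
proof -
  let ?w = "\<lambda>j. 2 * real (n - j) / \<rho> j"
  let ?Cc = "\<lambda>i j. Cc n \<rho> \<eta> Mf Lf M\<phi> L\<phi> (i - 1) j" and ?Ct = "\<lambda>i j. Ct \<rho> \<eta> M\<phi> (i - 1) j"
  have "(norm (lam (Suc (Suc k)) j - lam (Suc k) j))\<^sup>2 / \<rho> j
      \<le> (\<Sum>i = Suc j..n. ?w j * ((?Cc i j * a i)\<^sup>2 + (?Ct i j * b i)\<^sup>2))" if j: "j < n" for j
  proof -
    have "(norm (lam (Suc (Suc k)) j - lam (Suc k) j))\<^sup>2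
        \<le> 2 * real (n - j) * (\<Sum>i = Suc j..n. (?Cc i j * a i)\<^sup>2 + (?Ct i j * b i)\<^sup>2)"
      using square_le_card_mult_sum_squares[OF _ _ norm_multiplier_diff_le[OF S j]]
      by (simp add: a_def b_def)
    then show ?thesis
      using \<rho>_pos[OF j]
      by (simp add: sum_distrib_left sum_divide_distrib[symmetric] divide_right_mono)
  qed
  then have "(\<Sum>j<n. (norm (lam (Suc (Suc k)) j - lam (Suc k) j))\<^sup>2 / \<rho> j)
      \<le> (\<Sum>j<n. \<Sum>i = Suc j..n. ?w j * ((?Cc i j * a i)\<^sup>2 + (?Ct i j * b i)\<^sup>2))"
    by (intro sum_mono) simp
  also have "\<dots> = (\<Sum>i\<le>n. \<Sum>j<i. ?w j * ((?Cc i j * a i)\<^sup>2 + (?Ct i j * b i)\<^sup>2))"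
    by (rule sum.nested_swap'[symmetric])
  also have "\<dots> = (\<Sum>i\<le>n. (1 / (4 * \<eta> i) - coeff_c i) * (a i)\<^sup>2
                         + (1 / (4 * \<eta> i) - coeff_ct i) * (b i)\<^sup>2)"
    by (simp add: coeff_c_def coeff_ct_def sum_distrib_right sum.distrib power_mult_distrib
        distrib_left mult.assoc)
  finally show ?thesis .
qed

lemma lyap_decrease:
  assumes "xs (Suc (Suc k)) \<in> S" "xs (Suc k) \<in> S" "xs k \<in> S"
  shows "lyap (Suc (Suc k)) - lyap (Suc k)
     \<le> - (\<Sum>i\<le>n. coeff_c i * (norm (xs (Suc (Suc k)) i - xs (Suc k) i))\<^sup>2
                  + coeff_ct i * (norm (xs (Suc k) i - xs k i))\<^sup>2)"
  using lyap_step[of "Suc k"] sum_sq_multiplier_diff_le[OF assms]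
  by (simp add: algebra_simps sum.distrib sum_subtractf)

lemma coeff_pos:
  assumes param: "\<And>i. 1 \<le> i \<Longrightarrow> i \<le> n \<Longrightarrow>
      (\<Sum>j<i. 2 * real (n - j) / \<rho> j * (Cc n \<rho> \<eta> Mf Lf M\<phi> L\<phi> (i - 1) j)\<^sup>2) < 1 / (4 * \<eta> i)"
    and i: "i \<le> n"
  shows "coeff_c i > 0 \<and> coeff_ct i > 0"
proof (cases "i = 0")
  case True
  then show ?thesis using \<eta>_pos[of 0] by (simp add: coeff_c_def coeff_ct_def)
next
  case False
  have "(\<Sum>j<i. 2 * real (n - j) / \<rho> j * (Ct \<rho> \<eta> M\<phi> (i - 1) j)\<^sup>2)
      \<le> (\<Sum>j<i. 2 * real (n - j) / \<rho> j * (Cc n \<rho> \<eta> Mf Lf M\<phi> L\<phi> (i - 1) j)\<^sup>2)"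
  proof (intro sum_mono mult_left_mono power_mono)
    fix j assume "j \<in> {..<i}"
    then have j: "j < i" "\<eta> i > 0" "\<rho> (i - 1) > 0" "\<rho> j > 0"
      using i \<eta>_pos \<rho>_pos by auto
    show "0 \<le> Ct \<rho> \<eta> M\<phi> (i - 1) j"
      using j constants_nonneg by (intro Ct_nonneg) auto
    show "Ct \<rho> \<eta> M\<phi> (i - 1) j \<le> Cc n \<rho> \<eta> Mf Lf M\<phi> L\<phi> (i - 1) j"
      using j constants_nonneg by (intro Ct_le_Cc) auto
    show "0 \<le> 2 * real (n - j) / \<rho> j"
      using j by simp
  qed
  then show ?thesis
    using param[of i] False i by (simp add: coeff_c_def coeff_ct_def)
qed

end

section \<open>Invariance of the sublevel set\<close>

lemma coord_dist_le_Sup: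
  assumes "bounded_comp n S" "x \<in> S" "y \<in> S" "i \<le> n"
  shows "norm (x i - y i) \<le> Sup {norm (x i - y i) | x y. x \<in> S \<and> y \<in> S}"
proof (rule cSup_upper)
  obtain B where B: "\<And>x i. x \<in> S \<Longrightarrow> i \<le> n \<Longrightarrow> norm (x i) \<le> B"
    using assms(1) unfolding bounded_comp_def by blast
  show "bdd_above {norm (x i - y i) | x y. x \<in> S \<and> y \<in> S}"
  proof (rule bdd_aboveI)
    fix t assume "t \<in> {norm (x i - y i) | x y. x \<in> S \<and> y \<in> S}"
    then obtain x' y' where "t = norm (x' i - y' i)" "x' \<in> S" "y' \<in> S" by blast
    then show "t \<le> 2 * B"
      using norm_triangle_ineq4[of "x' i" "y' i"] B[of x' i] B[of y' i] assms(4) by linarith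
  qed
qed (use assms in blast)

lemma penalty_le_of_initial_gap:
  assumes "\<And>i. i < n \<Longrightarrow> (norm (x (Suc i) - \<phi> (x i)))\<^sup>2 \<le> M / \<rho> i"
    and "\<And>i. i < n \<Longrightarrow> 0 < \<rho>0 i" and "\<And>i. i < n \<Longrightarrow> 2 * \<rho>0 i < \<rho> i" and "M \<ge> 0"
  shows "(\<Sum>i<n. \<rho>0 i / 2 * (norm (x (Suc i) - \<phi> (x i)))\<^sup>2) \<le> real n * M"
proof -
  have "\<rho>0 i / 2 * (norm (x (Suc i) - \<phi> (x i)))\<^sup>2 \<le> M" if i: "i < n" for i
  proof -
    have "\<rho>0 i / 2 * (norm (x (Suc i) - \<phi> (x i)))\<^sup>2 \<le> \<rho>0 i / 2 * (M / \<rho> i)"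
      using assms(1,2)[OF i] by (intro mult_left_mono) auto
    also have "\<dots> = M * (\<rho>0 i / (2 * \<rho> i))" by simp
    also have "\<dots> \<le> M"
      using assms(2,3)[OF i] assms(4) mult_left_mono[of "\<rho>0 i / (2 * \<rho> i)" 1 M] by simp
    finally show ?thesis .
  qed
  then show ?thesis
    using sum_mono[of "{..<n}" _ "\<lambda>_. M"] by simp
qed

lemma initial_point_in_Sset:
  assumes "\<And>i. i < n \<Longrightarrow> (norm (x (Suc i) - \<phi> (x i)))\<^sup>2 \<le> M / \<rho> i"
    and "\<And>i. i < n \<Longrightarrow> 0 < \<rho>0 i" and "\<And>i. i < n \<Longrightarrow> 2 * \<rho>0 i < \<rho> i" and "M \<ge> 0"
  shows "x \<in> Sset n f \<phi> \<rho>0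
    ((\<Sum>i\<le>n. f i (x i)) + (\<Sum>i<n. 5 * (norm (l i))\<^sup>2 / (4 * \<rho>0 i)) + real n * (M + 3))"
proof -
  have "0 \<le> (\<Sum>i<n. 5 * (norm (l i))\<^sup>2 / (4 * \<rho>0 i))"
    using assms(2) by (intro sum_nonneg) (simp add: less_imp_le)
  then show ?thesis
    using penalty_le_of_initial_gap[of n x \<phi> M \<rho> \<rho>0, OF assms] by (simp add: Sset_def distrib_left)
qed

lemma Lrho_initial_le:
  assumes "\<And>i. i < n \<Longrightarrow> (norm (x (Suc i) - \<phi> (x i)))\<^sup>2 \<le> M / \<rho> i"
    and "\<And>i. i < n \<Longrightarrow> 0 < \<rho>0 i" and "\<And>i. i < n \<Longrightarrow> 2 * \<rho>0 i < \<rho> i"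
  shows "Lrho n f \<phi> \<rho> x l \<le> (\<Sum>i\<le>n. f i (x i)) + (\<Sum>i<n. (norm (l i))\<^sup>2 / \<rho>0 i) / 4 + real n * M"
proof -
  have "(norm (l i))\<^sup>2 / (2 * \<rho> i) + \<rho> i * (norm (x (Suc i) - \<phi> (x i)))\<^sup>2
      \<le> (norm (l i))\<^sup>2 / \<rho>0 i / 4 + M"
    if i: "i < n" for i
  proof -
    have "(norm (l i))\<^sup>2 / (2 * \<rho> i) \<le> (norm (l i))\<^sup>2 / (4 * \<rho>0 i)"
      using assms(2,3)[OF i] by (intro divide_left_mono) auto
    moreover have "\<rho> i * (norm (x (Suc i) - \<phi> (x i)))\<^sup>2 \<le> M"
      using assms(1-3)[OF i] by (simp add: pos_le_divide_eq mult.commute)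
    ultimately show ?thesis by (simp add: mult.commute)
  qed
  then have "(\<Sum>i<n. (norm (l i))\<^sup>2 / (2 * \<rho> i) + \<rho> i * (norm (x (Suc i) - \<phi> (x i)))\<^sup>2)
      \<le> (\<Sum>i<n. (norm (l i))\<^sup>2 / \<rho>0 i / 4 + M)"
    by (intro sum_mono) simp
  moreover have "\<rho> i > 0" if "i < n" for i
    using assms(2,3)[OF that] by simp
  ultimately show ?thesis
    using Lrho_upper_bound[where n=n and \<rho>=\<rho> and x=x and lam=l and f=f and \<phi>=\<phi>]
    by (simp add: sum.distrib sum_divide_distrib)
qed

locale prox_admm_sublevel = prox_admm_bounded n f gf \<phi> D\<phi> \<rho> \<eta> xs lam S D Mf Lf M\<phi> L\<phi>
  for n :: nat and f :: "nat \<Rightarrow> 'a::euclidean_space \<Rightarrow> real" and gf \<phi> D\<phi> \<rho> \<eta> xs lam S D Mf Lf M\<phi> L\<phi> +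
  fixes \<rho>0 :: "nat \<Rightarrow> real" and \<alpha> :: real
  assumes S_eq: "S = Sset n f \<phi> \<rho>0 \<alpha>"
    and \<rho>0_pos: "\<And>i. i < n \<Longrightarrow> 0 < \<rho>0 i"
    and \<rho>_gt: "\<And>i. i < n \<Longrightarrow> 2 * \<rho>0 i < \<rho> i"
    and radius_sq_lt: "\<And>i. i < n \<Longrightarrow> (multiplier_radius i)\<^sup>2 < \<rho> i"
begin

lemma in_sublevel_if_Lrho_le:
  assumes "\<And>j. j < n \<Longrightarrow> norm (l j) \<le> multiplier_radius j" and "Lrho n f \<phi> \<rho> x l + real n \<le> \<alpha>"
  shows "x \<in> S"
proof -
  have "(norm (l i))\<^sup>2 / (2 * (\<rho> i - \<rho>0 i)) \<le> 1" if i: "i < n" for i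
  proof -
    have "(norm (l i))\<^sup>2 \<le> (multiplier_radius i)\<^sup>2"
      using assms(1)[OF i] by (intro power_mono) auto
    then show ?thesis
      using radius_sq_lt[OF i] \<rho>_gt[OF i] \<rho>0_pos[OF i] by simp
  qed
  then have "(\<Sum>i<n. (norm (l i))\<^sup>2 / (2 * (\<rho> i - \<rho>0 i))) \<le> (\<Sum>i<n. 1)"
    by (intro sum_mono) simp
  moreover have "\<rho>0 j < \<rho> j" if "j < n" for j
    using \<rho>_gt[OF that] \<rho>0_pos[OF that] by simp
  then have "(\<Sum>i\<le>n. f i (x i)) + (\<Sum>i<n. \<rho>0 i / 2 * (norm (x (Suc i) - \<phi> (x i)))\<^sup>2)
      - (\<Sum>i<n. (norm (l i))\<^sup>2 / (2 * (\<rho> i - \<rho>0 i))) \<le> Lrho n f \<phi> \<rho> x l"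
    by (rule Lrho_lower_bound)
  ultimately show ?thesis
    using assms(2) unfolding S_eq Sset_def by simp
qed

lemma iterates_in_sublevel:
  assumes "xs 0 \<in> S" "xs 1 \<in> S" "lyap 1 + real n \<le> \<alpha>"
    and coeff_nonneg: "\<And>i. i \<le> n \<Longrightarrow> 0 \<le> coeff_c i \<and> 0 \<le> coeff_ct i"
  shows "xs k \<in> S \<and> xs (Suc k) \<in> S \<and> (\<forall>j<n. norm (lam (Suc k) j) \<le> multiplier_radius j)
    \<and> lyap (Suc k) \<le> lyap 1"
proof (induction k)
  case 0
  then show ?case using assms(1,2) norm_multiplier_le_radius[of 0] by simp
next
  case (Suc k)
  have "0 \<le> (\<Sum>i\<le>n. (norm (xs (Suc (Suc k)) i - xs (Suc k) i))\<^sup>2 / (2 * \<eta> i))"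
    using \<eta>_pos by (intro sum_nonneg) (simp add: less_imp_le)
  then have "Lrho n f \<phi> \<rho> (xs (Suc (Suc k))) (lam (Suc k)) + real n \<le> \<alpha>"
    using Lrho_block_descent[of "Suc k"] Lrho_le_lyap[of "Suc k"] assms(3) Suc by linarith
  then have S2: "xs (Suc (Suc k)) \<in> S"
    using Suc in_sublevel_if_Lrho_le by blast
  have "0 \<le> (\<Sum>i\<le>n. coeff_c i * (norm (xs (Suc (Suc k)) i - xs (Suc k) i))\<^sup>2
                     + coeff_ct i * (norm (xs (Suc k) i - xs k i))\<^sup>2)"
    using coeff_nonneg by (intro sum_nonneg add_nonneg_nonneg mult_nonneg_nonneg) auto
  then have "lyap (Suc (Suc k)) \<le> lyap (Suc k)"
    using lyap_decrease[of k] S2 Suc by simp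
  then show ?case
    using Suc S2 norm_multiplier_le_radius[of "Suc k"] by auto
qed

lemma sum_sq_div_gap_le:
  "(\<Sum>i<n. (norm (l i))\<^sup>2 / (2 * (\<rho> i - \<rho>0 i))) \<le> (\<Sum>i<n. (norm (l i))\<^sup>2 / \<rho>0 i) / 2"
proof -
  have "(norm (l i))\<^sup>2 / (2 * (\<rho> i - \<rho>0 i)) \<le> (norm (l i))\<^sup>2 / \<rho>0 i / 2" if "i < n" for i
  proof -
    have "(norm (l i))\<^sup>2 / (2 * (\<rho> i - \<rho>0 i)) \<le> (norm (l i))\<^sup>2 / (2 * \<rho>0 i)"
      using \<rho>0_pos[OF that] \<rho>_gt[OF that] by (intro divide_left_mono mult_pos_pos) auto
    then show ?thesis
      by (simp add: mult.commute)
  qed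
  then have "(\<Sum>i<n. (norm (l i))\<^sup>2 / (2 * (\<rho> i - \<rho>0 i))) \<le> (\<Sum>i<n. (norm (l i))\<^sup>2 / \<rho>0 i / 2)"
    by (intro sum_mono) simp
  then show ?thesis
    by (simp add: sum_divide_distrib)
qed

lemma sq_norm_diff_div_le:
  assumes "j < n" "norm l' \<le> multiplier_radius j"
  shows "(norm (l' - l))\<^sup>2 / \<rho> j \<le> 2 + (norm l)\<^sup>2 / \<rho>0 j"
proof -
  have "(norm l')\<^sup>2 \<le> (multiplier_radius j)\<^sup>2"
    using assms(2) by (intro power_mono) auto
  then have "(norm l')\<^sup>2 < \<rho> j"
    using radius_sq_lt[OF assms(1)] by linarith
  moreover have "(norm (l' - l))\<^sup>2 \<le> 2 * (norm l')\<^sup>2 + 2 * (norm l)\<^sup>2"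
  proof -
    have "(norm (l' - l))\<^sup>2 \<le> (norm l' + norm l)\<^sup>2"
      by (intro power_mono norm_triangle_ineq4) simp
    also have "\<dots> \<le> 2 * (norm l')\<^sup>2 + 2 * (norm l)\<^sup>2"
      using zero_le_power2[of "norm l' - norm l"] by (simp add: power2_eq_square algebra_simps)
    finally show ?thesis .
  qed
  moreover have "(norm l)\<^sup>2 / (\<rho> j / 2) \<le> (norm l)\<^sup>2 / \<rho>0 j"
    using \<rho>0_pos[OF assms(1)] \<rho>_gt[OF assms(1)] by (intro divide_left_mono mult_pos_pos) auto
  ultimately show ?thesis
    using \<rho>_pos[OF assms(1)] by (simp add: field_simps)
qed

lemma start_in_sublevel:
  assumes init: "\<And>i. i < n \<Longrightarrow> (norm (xs 0 (Suc i) - \<phi> (xs 0 i)))\<^sup>2 \<le> M / \<rho> i" and "M \<ge> 0"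
    and \<alpha>_eq: "\<alpha> = (\<Sum>i\<le>n. f i (xs 0 i)) + (\<Sum>i<n. 5 * (norm (lam 0 i))\<^sup>2 / (4 * \<rho>0 i))
                    + real n * (M + 3)"
  shows "xs 0 \<in> S" "xs 1 \<in> S" "lyap 1 + real n \<le> \<alpha>"
proof -
  define l0 where "l0 = (\<Sum>i<n. (norm (lam 0 i))\<^sup>2 / \<rho>0 i)"
  have \<alpha>: "\<alpha> = (\<Sum>i\<le>n. f i (xs 0 i)) + 5 / 4 * l0 + real n * (M + 3)"
    by (simp add: \<alpha>_eq l0_def sum_distrib_left)
  have "l0 \<ge> 0"
    unfolding l0_def using \<rho>0_pos by (intro sum_nonneg) (simp add: less_imp_le)
  have L0: "Lrho n f \<phi> \<rho> (xs 0) (lam 0) \<le> (\<Sum>i\<le>n. f i (xs 0 i)) + l0 / 4 + real n * M"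
    unfolding l0_def using init \<rho>0_pos \<rho>_gt by (rule Lrho_initial_le)
  show "xs 0 \<in> S"
    using initial_point_in_Sset[of n "xs 0" \<phi> M \<rho> \<rho>0, OF init \<rho>0_pos \<rho>_gt \<open>M \<ge> 0\<close>]
    by (simp add: S_eq \<alpha>_eq)
  have descent0: "Lrho n f \<phi> \<rho> (xs 1) (lam 0) \<le> Lrho n f \<phi> \<rho> (xs 0) (lam 0)"
  proof -
    have "0 \<le> (\<Sum>i\<le>n. (norm (xs 1 i - xs 0 i))\<^sup>2 / (2 * \<eta> i))"
      using \<eta>_pos by (intro sum_nonneg) (simp add: less_imp_le)
    then show ?thesis using Lrho_block_descent[of 0] by simp
  qed
  have "(\<Sum>i<n. (norm (lam 0 i))\<^sup>2 / (2 * (\<rho> i - \<rho>0 i))) \<le> l0 / 2"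
    unfolding l0_def by (rule sum_sq_div_gap_le)
  moreover have "(\<Sum>i\<le>n. f i (xs 1 i)) + (\<Sum>i<n. \<rho>0 i / 2 * (norm (xs 1 (Suc i) - \<phi> (xs 1 i)))\<^sup>2)
      - (\<Sum>i<n. (norm (lam 0 i))\<^sup>2 / (2 * (\<rho> i - \<rho>0 i))) \<le> Lrho n f \<phi> \<rho> (xs 1) (lam 0)"
    using \<rho>0_pos \<rho>_gt by (intro Lrho_lower_bound) (smt (verit))
  moreover have "real n * M \<le> real n * (M + 3)"
    by (simp add: mult_left_mono)
  ultimately show "xs 1 \<in> S"
    using L0 descent0 \<open>l0 \<ge> 0\<close> unfolding S_eq Sset_def \<alpha> mem_Collect_eq by linarith
  have "(norm (lam 1 j - lam 0 j))\<^sup>2 / \<rho> j \<le> 2 + (norm (lam 0 j))\<^sup>2 / \<rho>0 j" if "j < n" for j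
    using norm_multiplier_le_radius[of 0 j] \<open>xs 0 \<in> S\<close> \<open>xs 1 \<in> S\<close> that
    by (intro sq_norm_diff_div_le) simp_all
  then have "(\<Sum>j<n. (norm (lam 1 j - lam 0 j))\<^sup>2 / \<rho> j) \<le> (\<Sum>j<n. 2 + (norm (lam 0 j))\<^sup>2 / \<rho>0 j)"
    by (intro sum_mono) simp
  also have "\<dots> = 2 * real n + l0"
    by (simp add: l0_def sum.distrib)
  finally have "(\<Sum>j<n. (norm (lam 1 j - lam 0 j))\<^sup>2 / \<rho> j) \<le> 2 * real n + l0" .
  moreover have "0 \<le> (\<Sum>i\<le>n. (norm (xs 1 i - xs 0 i))\<^sup>2 / (4 * \<eta> i))"
    using \<eta>_pos by (intro sum_nonneg) (simp add: less_imp_le)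
  moreover have "lyap 0 = Lrho n f \<phi> \<rho> (xs 0) (lam 0)" \<comment> \<open>as \<open>0 - 1 = 0\<close> in \<open>nat\<close>\<close>
    by (simp add: Elyap_def)
  ultimately have "lyap 1 \<le> Lrho n f \<phi> \<rho> (xs 0) (lam 0) + 2 * real n + l0"
    using lyap_step[of 0] by simp
  then show "lyap 1 + real n \<le> \<alpha>"
    using L0 unfolding \<alpha> by (simp add: algebra_simps)
qed

end

theorem lemma3:
  fixes n :: nat
    and f :: "nat \<Rightarrow> 'a::euclidean_space \<Rightarrow> real" and gf :: "nat \<Rightarrow> 'a \<Rightarrow> 'a"
    and \<phi> :: "'a \<Rightarrow> 'a" and D\<phi> :: "'a \<Rightarrow> 'a \<Rightarrow>\<^sub>L 'a"
    and \<rho> \<rho>0 \<eta> :: "nat \<Rightarrow> real"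
    and xs lam :: "nat \<Rightarrow> nat \<Rightarrow> 'a"
    and M Mf Lf C\<phi> M\<phi> L\<phi> :: real
  assumes n_pos: "n \<ge> 1"
    and f_C1: "\<forall>i\<le>n. \<forall>z. (f i has_derivative (\<lambda>h. inner (gf i z) h)) (at z)"
    and f_C1_cont: "\<forall>i\<le>n. continuous_on UNIV (gf i)"
    and \<phi>_C1: "\<forall>z. (\<phi> has_derivative blinfun_apply (D\<phi> z)) (at z)"
    and \<phi>_C1_cont: "continuous_on UNIV D\<phi>"
    and \<rho>_pos: "\<forall>i<n. \<rho> i > 0"
    and \<eta>_pos: "\<forall>i\<le>n. \<eta> i > 0"
    and iter: "prox_admm n f \<phi> \<rho> \<eta> xs lam"
    and A1_pos: "\<forall>i<n. \<rho>0 i > 0"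
    and A1: "\<forall>\<alpha>. Sset n f \<phi> \<rho>0 \<alpha> = {} \<or> bounded_comp n (Sset n f \<phi> \<rho>0 \<alpha>)"
    and M_pos: "M > 0"
    and init: "\<forall>i<n. (norm (xs 0 (Suc i) - \<phi> (xs 0 i)))\<^sup>2 \<le> M / \<rho> i"
  defines "\<alpha>bar \<equiv> (\<Sum>i\<le>n. f i (xs 0 i)) + (\<Sum>i<n. 5 * (norm (lam 0 i))\<^sup>2 / (4 * \<rho>0 i))
                    + real n * (M + 3)"
  defines "S \<equiv> Sset n f \<phi> \<rho>0 \<alpha>bar"
  assumes A2_pos: "Mf > 0" "Lf > 0" "C\<phi> > 0" "M\<phi> > 0" "L\<phi> > 0"
    and A2: "\<forall>x\<in>S. \<forall>y\<in>S. \<forall>i\<le>n.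
               norm (gf i (x i)) \<le> Mf
             \<and> norm (gf i (x i) - gf i (y i)) \<le> Lf * norm (x i - y i)
             \<and> norm (\<phi> (x i)) \<le> C\<phi>
             \<and> norm (D\<phi> (x i)) \<le> M\<phi>
             \<and> norm (D\<phi> (x i) - D\<phi> (y i)) \<le> L\<phi> * norm (x i - y i)"
  defines "D \<equiv> (\<lambda>i. Sup {norm (x i - y i) | x y. x \<in> S \<and> y \<in> S})"
  defines "LB \<equiv> (\<lambda>i. geomq M\<phi> 0 (n - i) * Mf + (\<Sum>j\<in>{i..<n}. Bc \<rho> \<eta> M\<phi> j i * D (Suc j)))"
  defines "c \<equiv> (\<lambda>i. 1 / (4 * \<eta> i)
                   - (\<Sum>j<i. 2 * real (n - j) / \<rho> j * (Cc n \<rho> \<eta> Mf Lf M\<phi> L\<phi> (i - 1) j)\<^sup>2))"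
  defines "ct \<equiv> (\<lambda>i. 1 / (4 * \<eta> i)
                   - (\<Sum>j<i. 2 * real (n - j) / \<rho> j * (Ct \<rho> \<eta> M\<phi> (i - 1) j)\<^sup>2))"
  defines "E \<equiv> Elyap n f \<phi> \<rho> \<eta> xs lam"
  assumes param1: "\<forall>i\<in>{1..n}.
      (\<Sum>j<i. 2 * real (n - j) / \<rho> j * (Cc n \<rho> \<eta> Mf Lf M\<phi> L\<phi> (i - 1) j)\<^sup>2) < 1 / (4 * \<eta> i)"
    and param2: "\<forall>i<n. \<rho> i > max (2 * \<rho>0 i) ((LB i)\<^sup>2)"
  shows "(\<forall>i\<le>n. c i > 0 \<and> ct i > 0)
       \<and> (\<forall>k\<ge>1. xs k \<in> S
            \<and> (\<forall>i<n. norm (lam k i) \<le> LB i)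
            \<and> E (Suc k) - E k \<le> - (\<Sum>i\<le>n. c i * (norm (xs (Suc k) i - xs k i))\<^sup>2
                                         + ct i * (norm (xs k i - xs (k - 1) i))\<^sup>2)
            \<and> E (Suc k) \<le> E k)"
proof -
  have x0_S: "xs 0 \<in> S"
    unfolding S_def \<alpha>bar_def using init A1_pos param2 M_pos by (intro initial_point_in_Sset) auto
  then have "bounded_comp n S"
    using A1 unfolding S_def by blast
  then interpret prox_admm_bounded n f gf \<phi> D\<phi> \<rho> \<eta> xs lam S D Mf Lf M\<phi> L\<phi>
    using f_C1 \<phi>_C1 \<rho>_pos \<eta>_pos iter A2 A2_pos
    by unfold_locales (auto simp: D_def intro: coord_dist_le_Sup)
  have LB_eq: "LB = multiplier_radius" and c_eq: "c = coeff_c" and ct_eq: "ct = coeff_ct"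
    and E_eq: "E = lyap"
    by (simp_all add: fun_eq_iff LB_def multiplier_radius_def c_def coeff_c_def ct_def coeff_ct_def E_def)
  interpret prox_admm_sublevel n f gf \<phi> D\<phi> \<rho> \<eta> xs lam S D Mf Lf M\<phi> L\<phi> \<rho>0 \<alpha>bar
    using A1_pos param2 by unfold_locales (auto simp: S_def LB_eq)
  have coeff: "c i > 0 \<and> ct i > 0" if "i \<le> n" for i
    using coeff_pos[OF _ that] param1 by (simp add: c_eq ct_eq)
  have start: "xs 0 \<in> S" "xs 1 \<in> S" "lyap 1 + real n \<le> \<alpha>bar"
    using start_in_sublevel[of M] init M_pos by (simp_all add: \<alpha>bar_def)
  have inv: "xs k \<in> S \<and> xs (Suc k) \<in> S \<and> (\<forall>j<n. norm (lam (Suc k) j) \<le> LB j)" for k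
    using iterates_in_sublevel[OF start] coeff
    by (simp add: LB_eq c_eq ct_eq less_imp_le)
  have "xs k \<in> S \<and> (\<forall>i<n. norm (lam k i) \<le> LB i)
      \<and> E (Suc k) - E k \<le> - (\<Sum>i\<le>n. c i * (norm (xs (Suc k) i - xs k i))\<^sup>2
                                 + ct i * (norm (xs k i - xs (k - 1) i))\<^sup>2)
      \<and> E (Suc k) \<le> E k" if "k \<ge> 1" for k
  proof -
    obtain k' where k: "k = Suc k'" using \<open>k \<ge> 1\<close> by (cases k) auto
    have "0 \<le> (\<Sum>i\<le>n. c i * (norm (xs (Suc k) i - xs k i))\<^sup>2
                       + ct i * (norm (xs k i - xs (k - 1) i))\<^sup>2)"
      using coeff by (intro sum_nonneg add_nonneg_nonneg mult_nonneg_nonneg) (auto simp: less_imp_le)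
    then show ?thesis
      using lyap_decrease[of k'] inv[of k'] inv[of k]
      by (simp add: k E_eq c_eq ct_eq)
  qed
  then show ?thesis
    using coeff by blast
qed

end
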